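(* Let $\hat\tau^{\mathrm{ols}}$ be the ordinary least squares coefficient of $Z_{ij}$ obtained by fitting the one-stage meta-analysis model $Y_{ij}=\phi+\tau Z_{ij}+\sum_{l\in F}\{\beta_{i,l}X_{ij,l}+\gamma_{i,l}X_{ij,l}Z_{ij}\}+\sum_{l\in C}\{\beta_l X_{ij,l}+\gamma_l X_{ij,l}Z_{ij}\}+\epsilon_{ij}$, i.e. the OLS regression of $Y_{ij}$ on an intercept, $Z_{ij}$, the regressors $1\{i=i'\}X_{ij,l}$ ($l\in F$, $i'=1,\dots,m$), the regressors $X_{ij,l}$ ($l\in C$), and all of these regressors multiplied by $Z_{ij}$. For $z\in\{0,1\}$ let $(\hat w^{\mathrm{ols}}_{z,ij})_{ij:Z_{ij}=z}$ be the solution of minimize $\sum_{i=1}^m\sum_{j:Z_{ij}=z}w_{ij}^2$ subject to $\sum_{i=1}^m\sum_{j:Z_{ij}=z}w_{ij}X_{ij,l}=0$ for all $l\in C$; $\sum_{j:Z_{ij}=z}w_{ij}X_{ij,l}=0$ for all $l\in F$ and all $i=1,\dots,m$; and $\sum_{i=1}^m\sum_{j:Z_{ij}=z}w_{ij}=1$. Then $\hat\tau^{\mathrm{ols}}=\sum_{i=1}^m\sum_{j:Z_{ij}=1}\hat w^{\mathrm{ols}}_{1,ij}Y_{ij}-\sum_{i=1}^m\sum_{j:Z_{ij}=0}\hat w^{\mathrm{ols}}_{0,ij}Y_{ij}$.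
   Context: Individual-level data from $m$ studies: study $i$ has $n_i$ individuals; individual $ij$ has binary treatment $Z_{ij}$, covariate vector $X_{ij}=(X_{ij,1},\dots,X_{ij,p})^\top\in\mathbb{R}^p$ and outcome $Y_{ij}$. The covariate indices are split into a set $F$ (covariates with study-specific, "fixed", coefficients) and a set $C$ (covariates with coefficients common to all studies), with $F\cup C=\{1,\dots,p\}$. The intercept $\phi$ and treatment effect $\tau$ are common to all studies. The OLS fit is assumed to be well defined (design matrix of full column rank). *)

theory Defs
  imports Complex_Main
begin

text \<open>Z i j is the (binary) treatment, X i j l the l-th
  covariate of individual ij, Y i j the outcome.\<close>

definition obs :: "nat \<Rightarrow> (nat \<Rightarrow> nat) \<Rightarrow> (nat \<times> nat) set" where
  "obs m n = {(i, j). i \<in> {1..m} \<and> j \<in> {1..n i}}"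

datatype reg = Icpt | Trt | XF nat nat | XC nat | XFZ nat nat | XCZ nat

definition regs :: "nat \<Rightarrow> nat set \<Rightarrow> nat set \<Rightarrow> reg set" where
  "regs m F C = {Icpt, Trt}
     \<union> {XF l i' | l i'. l \<in> F \<and> i' \<in> {1..m}} \<union> {XC l | l. l \<in> C}
     \<union> {XFZ l i' | l i'. l \<in> F \<and> i' \<in> {1..m}} \<union> {XCZ l | l. l \<in> C}"

definition zval :: "(nat \<Rightarrow> nat \<Rightarrow> bool) \<Rightarrow> nat \<Rightarrow> nat \<Rightarrow> real" where
  "zval Z i j = (if Z i j then 1 else 0)"

fun regval :: "(nat \<Rightarrow> nat \<Rightarrow> bool) \<Rightarrow> (nat \<Rightarrow> nat \<Rightarrow> nat \<Rightarrow> real) \<Rightarrow> reg \<Rightarrow> nat \<Rightarrow> nat \<Rightarrow> real" where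
  "regval Z X Icpt i j = 1"
| "regval Z X Trt i j = zval Z i j"
| "regval Z X (XF l i') i j = (if i = i' then X i j l else 0)"
| "regval Z X (XC l) i j = X i j l"
| "regval Z X (XFZ l i') i j = (if i = i' then X i j l else 0) * zval Z i j"
| "regval Z X (XCZ l) i j = X i j l * zval Z i j"

definition fitted :: "nat \<Rightarrow> nat set \<Rightarrow> nat set \<Rightarrow> (nat \<Rightarrow> nat \<Rightarrow> bool) \<Rightarrow> (nat \<Rightarrow> nat \<Rightarrow> nat \<Rightarrow> real)
    \<Rightarrow> (reg \<Rightarrow> real) \<Rightarrow> nat \<Rightarrow> nat \<Rightarrow> real" where
  "fitted m F C Z X b i j = (\<Sum>r\<in>regs m F C. b r * regval Z X r i j)"

definition rss :: "nat \<Rightarrow> (nat \<Rightarrow> nat) \<Rightarrow> nat set \<Rightarrow> nat set \<Rightarrow> (nat \<Rightarrow> nat \<Rightarrow> bool)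
    \<Rightarrow> (nat \<Rightarrow> nat \<Rightarrow> nat \<Rightarrow> real) \<Rightarrow> (nat \<Rightarrow> nat \<Rightarrow> real) \<Rightarrow> (reg \<Rightarrow> real) \<Rightarrow> real" where
  "rss m n F C Z X Y b = (\<Sum>(i, j)\<in>obs m n. (Y i j - fitted m F C Z X b i j)\<^sup>2)"

definition is_ols :: "nat \<Rightarrow> (nat \<Rightarrow> nat) \<Rightarrow> nat set \<Rightarrow> nat set \<Rightarrow> (nat \<Rightarrow> nat \<Rightarrow> bool)
    \<Rightarrow> (nat \<Rightarrow> nat \<Rightarrow> nat \<Rightarrow> real) \<Rightarrow> (nat \<Rightarrow> nat \<Rightarrow> real) \<Rightarrow> (reg \<Rightarrow> real) \<Rightarrow> bool" where
  "is_ols m n F C Z X Y b \<longleftrightarrow> (\<forall>b'. rss m n F C Z X Y b \<le> rss m n F C Z X Y b')"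

definition full_rank :: "nat \<Rightarrow> (nat \<Rightarrow> nat) \<Rightarrow> nat set \<Rightarrow> nat set \<Rightarrow> (nat \<Rightarrow> nat \<Rightarrow> bool)
    \<Rightarrow> (nat \<Rightarrow> nat \<Rightarrow> nat \<Rightarrow> real) \<Rightarrow> bool" where
  "full_rank m n F C Z X \<longleftrightarrow>
     (\<forall>c. (\<forall>(i, j)\<in>obs m n. (\<Sum>r\<in>regs m F C. c r * regval Z X r i j) = 0)
          \<longrightarrow> (\<forall>r\<in>regs m F C. c r = 0))"

definition w_feasible :: "nat \<Rightarrow> (nat \<Rightarrow> nat) \<Rightarrow> nat set \<Rightarrow> nat set \<Rightarrow> (nat \<Rightarrow> nat \<Rightarrow> bool)
    \<Rightarrow> (nat \<Rightarrow> nat \<Rightarrow> nat \<Rightarrow> real) \<Rightarrow> bool \<Rightarrow> (nat \<Rightarrow> nat \<Rightarrow> real) \<Rightarrow> bool" where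
  "w_feasible m n F C Z X z w \<longleftrightarrow>
     (\<forall>l\<in>C. (\<Sum>(i, j)\<in>{(i, j)\<in>obs m n. Z i j = z}. w i j * X i j l) = 0)
   \<and> (\<forall>l\<in>F. \<forall>i\<in>{1..m}. (\<Sum>j\<in>{j\<in>{1..n i}. Z i j = z}. w i j * X i j l) = 0)
   \<and> (\<Sum>(i, j)\<in>{(i, j)\<in>obs m n. Z i j = z}. w i j) = 1"

definition w_objective :: "nat \<Rightarrow> (nat \<Rightarrow> nat) \<Rightarrow> (nat \<Rightarrow> nat \<Rightarrow> bool) \<Rightarrow> bool
    \<Rightarrow> (nat \<Rightarrow> nat \<Rightarrow> real) \<Rightarrow> real" where
  "w_objective m n Z z w = (\<Sum>(i, j)\<in>{(i, j)\<in>obs m n. Z i j = z}. (w i j)\<^sup>2)"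

definition w_optimal :: "nat \<Rightarrow> (nat \<Rightarrow> nat) \<Rightarrow> nat set \<Rightarrow> nat set \<Rightarrow> (nat \<Rightarrow> nat \<Rightarrow> bool)
    \<Rightarrow> (nat \<Rightarrow> nat \<Rightarrow> nat \<Rightarrow> real) \<Rightarrow> bool \<Rightarrow> (nat \<Rightarrow> nat \<Rightarrow> real) \<Rightarrow> bool" where
  "w_optimal m n F C Z X z w \<longleftrightarrow> w_feasible m n F C Z X z w \<and>
     (\<forall>w'. w_feasible m n F C Z X z w' \<longrightarrow> w_objective m n Z z w \<le> w_objective m n Z z w')"

end

theory Submission
  imports Defs
begin

(* The OLS residual e = Y - fitted is orthogonal to every regressor.  The regressors come in
   pairs x and x Z (the intercept pairs with Z), and orthogonality to both members of a pair
   means orthogonality to x within each treatment arm separately.  So within arm z the residual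
   is a direction along which all constraints of the weighting problem are invariant, and the
   first-order condition of the minimum-norm problem gives sum w_z e = 0, whence
   sum w_z Y = sum_r b_r (sum w_z x_r).  The constraints make the inner sum 1 for the intercept,
   z for the treatment and 0 for every covariate regressor, so sum w_z Y = phi + z tau. *)

lemma linear_coeff_eq_0_if_quadratic_nonneg:
  fixes a c :: real
  assumes nonneg: "\<And>t. 0 \<le> 2 * t * a + t\<^sup>2 * c"
  shows "a = 0"
proof -
  define s where "s = \<bar>c\<bar> + 1"
  define t where "t = - a / s"
  have ts: "t * s = - a" by (simp add: t_def s_def)
  have "(2 * t * a + t\<^sup>2 * c) * s\<^sup>2 = 2 * a * (t * s) * s + c * (t * s)\<^sup>2"
    by (simp add: power2_eq_square algebra_simps)
  also have "\<dots> = - (a\<^sup>2 * (2 * s - c))"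
    unfolding ts by (simp add: power2_eq_square algebra_simps)
  finally have "a\<^sup>2 * (2 * s - c) \<le> 0"
    using nonneg[of t] by (metis neg_0_le_iff_le zero_le_mult_iff zero_le_power2)
  moreover have "2 * s - c > 0" by (simp add: s_def)
  ultimately show ?thesis by (simp add: mult_le_0_iff)
qed

lemma sum_mult_eq_0_if_sum_squares_minimal:
  fixes u v :: "'a \<Rightarrow> real"
  assumes min: "\<And>t. (\<Sum>x\<in>S. (u x)\<^sup>2) \<le> (\<Sum>x\<in>S. (u x + t * v x)\<^sup>2)"
  shows "(\<Sum>x\<in>S. u x * v x) = 0"
proof (rule linear_coeff_eq_0_if_quadratic_nonneg)
  fix t
  have "(\<Sum>x\<in>S. (u x + t * v x)\<^sup>2)
      = (\<Sum>x\<in>S. (u x)\<^sup>2) + 2 * t * (\<Sum>x\<in>S. u x * v x) + t\<^sup>2 * (\<Sum>x\<in>S. (v x)\<^sup>2)"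
    by (simp add: power2_eq_square algebra_simps sum.distrib sum_distrib_left)
  then show "0 \<le> 2 * t * (\<Sum>x\<in>S. u x * v x) + t\<^sup>2 * (\<Sum>x\<in>S. (v x)\<^sup>2)"
    using min[of t] by linarith
qed

abbreviation arm :: "nat \<Rightarrow> (nat \<Rightarrow> nat) \<Rightarrow> (nat \<Rightarrow> nat \<Rightarrow> bool) \<Rightarrow> bool \<Rightarrow> (nat \<times> nat) set" where
  "arm m n Z z \<equiv> {(i, j)\<in>obs m n. Z i j = z}"

lemma finite_obs [simp]: "finite (obs m n)"
proof -
  have "obs m n = Sigma {1..m} (\<lambda>i. {1..n i})"
    unfolding obs_def by auto
  then show ?thesis by simp
qed

lemma sum_arm_eq_sum_if:
  "(\<Sum>(i, j)\<in>arm m n Z z. g i j) = (\<Sum>(i, j)\<in>obs m n. if Z i j = z then g i j else 0)"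
  by (simp add: sum.inter_filter[symmetric] split_def)

lemma sum_arm_study:
  fixes f :: "nat \<Rightarrow> nat \<Rightarrow> real"
  assumes "i \<in> {1..m}"
  shows "(\<Sum>(i', j)\<in>arm m n Z z. if i' = i then f i' j else 0)
    = (\<Sum>j\<in>{j\<in>{1..n i}. Z i j = z}. f i j)"
proof -
  have "{x\<in>arm m n Z z. fst x = i} = Pair i ` {j\<in>{1..n i}. Z i j = z}"
    using assms unfolding obs_def by auto
  then have "(\<Sum>(i', j)\<in>arm m n Z z. if i' = i then f i' j else 0)
      = (\<Sum>(i', j)\<in>Pair i ` {j\<in>{1..n i}. Z i j = z}. f i' j)"
    by (simp add: sum.inter_filter[symmetric] split_def)
  also have "\<dots> = (\<Sum>j\<in>{j\<in>{1..n i}. Z i j = z}. f i j)"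
    by (simp add: sum.reindex inj_on_def)
  finally show ?thesis .
qed

lemma sum_arm_eq_0_if_orthogonal:
  fixes g :: "nat \<Rightarrow> nat \<Rightarrow> real"
  assumes "(\<Sum>(i, j)\<in>obs m n. g i j) = 0" and "(\<Sum>(i, j)\<in>obs m n. g i j * zval Z i j) = 0"
  shows "(\<Sum>(i, j)\<in>arm m n Z z. g i j) = 0"
proof -
  have "(\<Sum>(i, j)\<in>arm m n Z True. g i j) = (\<Sum>(i, j)\<in>obs m n. g i j * zval Z i j)"
    unfolding sum_arm_eq_sum_if by (rule sum.cong) (auto simp: zval_def)
  moreover have "(\<Sum>(i, j)\<in>arm m n Z False. g i j)
      = (\<Sum>(i, j)\<in>obs m n. g i j) - (\<Sum>(i, j)\<in>obs m n. g i j * zval Z i j)"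
    unfolding sum_arm_eq_sum_if sum_subtractf[symmetric] by (rule sum.cong) (auto simp: zval_def)
  ultimately show ?thesis using assms by (cases z) simp_all
qed

lemma sum_arm_mult_zval:
  fixes g :: "nat \<Rightarrow> nat \<Rightarrow> real"
  shows "(\<Sum>(i, j)\<in>arm m n Z z. g i j * zval Z i j) = of_bool z * (\<Sum>(i, j)\<in>arm m n Z z. g i j)"
  unfolding sum_distrib_left by (rule sum.cong) (auto simp: zval_def)

definition arm_balanced :: "nat \<Rightarrow> (nat \<Rightarrow> nat) \<Rightarrow> nat set \<Rightarrow> nat set \<Rightarrow> (nat \<Rightarrow> nat \<Rightarrow> bool)
    \<Rightarrow> (nat \<Rightarrow> nat \<Rightarrow> nat \<Rightarrow> real) \<Rightarrow> bool \<Rightarrow> (nat \<Rightarrow> nat \<Rightarrow> real) \<Rightarrow> bool" where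
  "arm_balanced m n F C Z X z e \<longleftrightarrow>
     (\<forall>l\<in>C. (\<Sum>(i, j)\<in>arm m n Z z. e i j * X i j l) = 0)
   \<and> (\<forall>l\<in>F. \<forall>i\<in>{1..m}. (\<Sum>j\<in>{j\<in>{1..n i}. Z i j = z}. e i j * X i j l) = 0)"

lemma w_feasible_iff_arm_balanced:
  "w_feasible m n F C Z X z w \<longleftrightarrow>
     arm_balanced m n F C Z X z w \<and> (\<Sum>(i, j)\<in>arm m n Z z. w i j) = 1"
  unfolding w_feasible_def arm_balanced_def by auto

lemma arm_balanced_add_scaled:
  assumes "arm_balanced m n F C Z X z w" and "arm_balanced m n F C Z X z e"
  shows "arm_balanced m n F C Z X z (\<lambda>i j. w i j + t * e i j)"
  using assms unfolding arm_balanced_def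
  by (simp add: algebra_simps sum.distrib sum_distrib_left[symmetric] split_def)

lemma w_optimal_orthogonal:
  assumes opt: "w_optimal m n F C Z X z w"
    and bal: "arm_balanced m n F C Z X z e" and total: "(\<Sum>(i, j)\<in>arm m n Z z. e i j) = 0"
  shows "(\<Sum>(i, j)\<in>arm m n Z z. w i j * e i j) = 0"
proof -
  have "(\<Sum>x\<in>arm m n Z z. w (fst x) (snd x) * e (fst x) (snd x)) = 0"
  proof (rule sum_mult_eq_0_if_sum_squares_minimal)
    fix t
    have "w_feasible m n F C Z X z (\<lambda>i j. w i j + t * e i j)"
      using opt bal total arm_balanced_add_scaled[of m n F C Z X z w e t]
      unfolding w_optimal_def w_feasible_iff_arm_balanced
      by (simp add: sum.distrib sum_distrib_left[symmetric] split_def)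
    then have "w_objective m n Z z w \<le> w_objective m n Z z (\<lambda>i j. w i j + t * e i j)"
      using opt unfolding w_optimal_def by blast
    then show "(\<Sum>x\<in>arm m n Z z. (w (fst x) (snd x))\<^sup>2)
        \<le> (\<Sum>x\<in>arm m n Z z. (w (fst x) (snd x) + t * e (fst x) (snd x))\<^sup>2)"
      unfolding w_objective_def by (simp add: split_def)
  qed
  then show ?thesis by (simp add: split_def)
qed

lemma mem_regs_iff:
  "r \<in> regs m F C \<longleftrightarrow> (case r of
      Icpt \<Rightarrow> True | Trt \<Rightarrow> True
    | XF l i \<Rightarrow> l \<in> F \<and> i \<in> {1..m} | XC l \<Rightarrow> l \<in> C
    | XFZ l i \<Rightarrow> l \<in> F \<and> i \<in> {1..m} | XCZ l \<Rightarrow> l \<in> C)"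
  unfolding regs_def by (cases r) auto

lemma finite_regs:
  assumes "finite F" and "finite C"
  shows "finite (regs m F C)"
  unfolding regs_def using assms by (auto intro!: finite_image_set2 finite_image_set)

lemma ols_residual_orthogonal:
  assumes fin: "finite (regs m F C)" and ols: "is_ols m n F C Z X Y b" and r: "r \<in> regs m F C"
  shows "(\<Sum>(i, j)\<in>obs m n. (Y i j - fitted m F C Z X b i j) * regval Z X r i j) = 0"
proof -
  have fitted_shift:
    "fitted m F C Z X (b(r := b r - t)) i j = fitted m F C Z X b i j - t * regval Z X r i j"
    for t i j
  proof -
    have "(\<Sum>s\<in>regs m F C - {r}. (b(r := b r - t)) s * regval Z X s i j)
        = (\<Sum>s\<in>regs m F C - {r}. b s * regval Z X s i j)"
      by (rule sum.cong) auto
    then show ?thesis unfolding fitted_def by (simp add: sum.remove[OF fin r] algebra_simps)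
  qed
  have "(\<Sum>x\<in>obs m n. (Y (fst x) (snd x) - fitted m F C Z X b (fst x) (snd x))
      * regval Z X r (fst x) (snd x)) = 0"
  proof (rule sum_mult_eq_0_if_sum_squares_minimal)
    fix t
    have "rss m n F C Z X Y b \<le> rss m n F C Z X Y (b(r := b r - t))"
      using ols unfolding is_ols_def by blast
    then show "(\<Sum>x\<in>obs m n. (Y (fst x) (snd x) - fitted m F C Z X b (fst x) (snd x))\<^sup>2)
      \<le> (\<Sum>x\<in>obs m n. (Y (fst x) (snd x) - fitted m F C Z X b (fst x) (snd x)
           + t * regval Z X r (fst x) (snd x))\<^sup>2)"
      unfolding rss_def fitted_shift by (simp add: split_def algebra_simps)
  qed
  then show ?thesis by (simp add: split_def)
qed

lemma ols_residual_arm_balanced: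
  assumes fin: "finite (regs m F C)" and ols: "is_ols m n F C Z X Y b"
  defines "e \<equiv> \<lambda>i j. Y i j - fitted m F C Z X b i j"
  shows "arm_balanced m n F C Z X z e" and "(\<Sum>(i, j)\<in>arm m n Z z. e i j) = 0"
proof -
  have orth: "(\<Sum>(i, j)\<in>obs m n. e i j * regval Z X r i j) = 0" if "r \<in> regs m F C" for r
    unfolding e_def by (rule ols_residual_orthogonal[OF fin ols that])
  show "(\<Sum>(i, j)\<in>arm m n Z z. e i j) = 0"
    using orth[of Icpt] orth[of Trt] by (intro sum_arm_eq_0_if_orthogonal) (simp_all add: mem_regs_iff)
  have common: "(\<Sum>(i, j)\<in>arm m n Z z. e i j * X i j l) = 0" if "l \<in> C" for l
    using orth[of "XC l"] orth[of "XCZ l"] that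
    by (intro sum_arm_eq_0_if_orthogonal) (simp_all add: mem_regs_iff mult.assoc)
  have fixed: "(\<Sum>j\<in>{j\<in>{1..n i}. Z i j = z}. e i j * X i j l) = 0"
    if "l \<in> F" "i \<in> {1..m}" for l i
  proof -
    have delta: "e i' j * (if i' = i then X i' j l else 0) = (if i' = i then e i' j * X i' j l else 0)"
      for i' j by simp
    have "(\<Sum>(i', j)\<in>arm m n Z z. if i' = i then e i' j * X i' j l else 0) = 0"
      using orth[of "XF l i"] orth[of "XFZ l i"] that
      by (intro sum_arm_eq_0_if_orthogonal) (simp_all add: mem_regs_iff delta mult.assoc[symmetric])
    then show ?thesis using sum_arm_study[OF that(2)] by simp
  qed
  show "arm_balanced m n F C Z X z e"
    unfolding arm_balanced_def using common fixed by blast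
qed

lemma w_feasible_sum_regval:
  assumes feas: "w_feasible m n F C Z X z w" and r: "r \<in> regs m F C"
  shows "(\<Sum>(i, j)\<in>arm m n Z z. w i j * regval Z X r i j)
    = (if r = Icpt then 1 else if r = Trt then of_bool z else 0)"
proof -
  have total: "(\<Sum>(i, j)\<in>arm m n Z z. w i j) = 1"
    and common: "\<And>l. l \<in> C \<Longrightarrow> (\<Sum>(i, j)\<in>arm m n Z z. w i j * X i j l) = 0"
    and fixed: "\<And>l i. l \<in> F \<Longrightarrow> i \<in> {1..m} \<Longrightarrow>
      (\<Sum>(i', j)\<in>arm m n Z z. if i' = i then w i' j * X i' j l else 0) = 0"
    using feas by (auto simp: w_feasible_iff_arm_balanced arm_balanced_def sum_arm_study)
  have delta: "w i' j * (if i' = i then X i' j l else 0) = (if i' = i then w i' j * X i' j l else 0)"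
    for i' j i l by simp
  show ?thesis
    using r total common fixed
    by (cases r) (simp_all add: mem_regs_iff delta mult.assoc[symmetric] sum_arm_mult_zval)
qed

lemma arm_weighted_outcome_eq:
  assumes fin: "finite (regs m F C)" and ols: "is_ols m n F C Z X Y b"
    and opt: "w_optimal m n F C Z X z w"
  shows "(\<Sum>(i, j)\<in>arm m n Z z. w i j * Y i j) = b Icpt + of_bool z * b Trt"
proof -
  define e where "e i j = Y i j - fitted m F C Z X b i j" for i j
  have feas: "w_feasible m n F C Z X z w" using opt unfolding w_optimal_def by blast
  have "(\<Sum>(i, j)\<in>arm m n Z z. w i j * Y i j)
      = (\<Sum>(i, j)\<in>arm m n Z z. w i j * fitted m F C Z X b i j)
        + (\<Sum>(i, j)\<in>arm m n Z z. w i j * e i j)"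
    by (simp add: e_def split_def sum.distrib[symmetric] algebra_simps)
  also have "(\<Sum>(i, j)\<in>arm m n Z z. w i j * e i j) = 0"
    using w_optimal_orthogonal[OF opt] ols_residual_arm_balanced[OF fin ols] unfolding e_def by blast
  also have "(\<Sum>(i, j)\<in>arm m n Z z. w i j * fitted m F C Z X b i j)
      = (\<Sum>r\<in>regs m F C. b r * (\<Sum>(i, j)\<in>arm m n Z z. w i j * regval Z X r i j))"
    unfolding fitted_def by (simp add: split_def sum_distrib_left algebra_simps) (rule sum.swap)
  also have "\<dots> = (\<Sum>r\<in>regs m F C.
      (if r = Icpt then b Icpt else 0) + (if r = Trt then of_bool z * b Trt else 0))"
    by (rule sum.cong) (auto simp: w_feasible_sum_regval[OF feas])
  also have "\<dots> = b Icpt + of_bool z * b Trt"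
    using fin by (simp add: sum.distrib mem_regs_iff)
  finally show ?thesis by simp
qed

theorem proposition2:
  fixes m p :: nat and n :: "nat \<Rightarrow> nat" and F C :: "nat set"
    and Z :: "nat \<Rightarrow> nat \<Rightarrow> bool" and X :: "nat \<Rightarrow> nat \<Rightarrow> nat \<Rightarrow> real"
    and Y :: "nat \<Rightarrow> nat \<Rightarrow> real"
    and b :: "reg \<Rightarrow> real" and w1 w0 :: "nat \<Rightarrow> nat \<Rightarrow> real"
  assumes split: "F \<union> C = {1..p}" "F \<inter> C = {}"
    and rank: "full_rank m n F C Z X"
    and ols: "is_ols m n F C Z X Y b"
    and opt1: "w_optimal m n F C Z X True w1"
    and opt0: "w_optimal m n F C Z X False w0"
  shows "b Trt = (\<Sum>(i, j)\<in>{(i, j)\<in>obs m n. Z i j}. w1 i j * Y i j)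
               - (\<Sum>(i, j)\<in>{(i, j)\<in>obs m n. \<not> Z i j}. w0 i j * Y i j)"
proof -
  have "finite (regs m F C)"
    using split(1) by (metis finite_Un finite_atLeastAtMost finite_regs)
  with ols have "(\<Sum>(i, j)\<in>arm m n Z True. w1 i j * Y i j) = b Icpt + b Trt"
    and "(\<Sum>(i, j)\<in>arm m n Z False. w0 i j * Y i j) = b Icpt"
    using arm_weighted_outcome_eq opt1 opt0 by fastforce+
  then show ?thesis by simp
qed

end
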